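(* Let $\mathcal M\subseteq\mathcal B(\mathcal H)$ be a countably decomposable, properly infinite, semifinite von Neumann algebra with a faithful normal semifinite tracial weight $\tau$. Let $H$ be a self-adjoint element of $\mathscr A(\mathcal M)$ with spectral resolution $\{E(\lambda)\}_{\lambda\in\mathbb R}$, and let $\mathcal A$ be the von Neumann subalgebra of $\mathcal M$ generated by $\{E(\lambda)\}_{\lambda\in\mathbb R}$. Then $P^\infty_{ac}(H)\in\mathcal A'\cap\mathcal M$.
   Context: $\mathscr A(\mathcal M)$ is the set of densely defined closed operators affiliated with $\mathcal M$; $\mathcal A'$ denotes the commutant of $\mathcal A$ in $\mathcal B(\mathcal H)$. A projection $P\in\mathcal M$ is a norm absolutely continuous projection with respect to $H$ if $\lambda\mapsto PE(\lambda)P$ from $\mathbb R$ into $\mathcal M$ is locally absolutely continuous in operator norm (for all $a<b$, $\epsilon>0$ there is $\delta>0$ with $\sum_i\|PE(b_i)P-PE(a_i)P\|<\epsilon$ for every finite family of disjoint intervals $(a_i,b_i)\subseteq[a,b]$ with $\sum_i(b_i-a_i)<\delta$); $P^\infty_{ac}(H)$ is the supremum of all such projections. *)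

theory Defs
  imports "HOL-Analysis.Analysis"
begin

text \<open>A complex Hilbert space: a real Banach space carrying a complex scalar
multiplication (extending the real one) and a complex inner product
(conjugate-linear in the first, linear in the second argument) inducing the norm.\<close>

class chilbert = banach +
  fixes cscale :: "complex \<Rightarrow> 'a \<Rightarrow> 'a"
    and cinner :: "'a \<Rightarrow> 'a \<Rightarrow> complex"
  assumes cscale_add_right: "cscale c (x + y) = cscale c x + cscale c y"
    and cscale_add_left: "cscale (c + d) x = cscale c x + cscale d x"
    and cscale_cscale: "cscale c (cscale d x) = cscale (c * d) x"
    and cscale_one: "cscale 1 x = x"
    and cscale_of_real: "cscale (complex_of_real r) x = scaleR r x"
    and cinner_add_right: "cinner x (y + z) = cinner x y + cinner x z"
    and cinner_cscale_right: "cinner x (cscale c y) = c * cinner x y"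
    and cinner_commute: "cinner x y = cnj (cinner y x)"
    and norm_cinner: "complex_of_real ((norm x)\<^sup>2) = cinner x x"

definition bop :: "('a::chilbert \<Rightarrow> 'a) set" where
  "bop = {T. bounded_linear T \<and> (\<forall>c x. T (cscale c x) = cscale c (T x))}"

definition adj :: "('a::chilbert \<Rightarrow> 'a) \<Rightarrow> ('a \<Rightarrow> 'a)" where
  "adj T = (THE S. \<forall>x y. cinner (T x) y = cinner x (S y))"

definition positive_op :: "('a::chilbert \<Rightarrow> 'a) \<Rightarrow> bool" where
  "positive_op T \<longleftrightarrow> T \<in> bop \<and> (\<forall>x. Im (cinner x (T x)) = 0 \<and> Re (cinner x (T x)) \<ge> 0)"

definition op_le :: "('a::chilbert \<Rightarrow> 'a) \<Rightarrow> ('a \<Rightarrow> 'a) \<Rightarrow> bool" where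
  "op_le S T \<longleftrightarrow> S \<in> bop \<and> T \<in> bop \<and> adj S = S \<and> adj T = T \<and> positive_op (\<lambda>x. T x - S x)"

definition is_proj :: "('a::chilbert \<Rightarrow> 'a) \<Rightarrow> bool" where
  "is_proj P \<longleftrightarrow> P \<in> bop \<and> P \<circ> P = P \<and> adj P = P"

definition commutant :: "('a::chilbert \<Rightarrow> 'a) set \<Rightarrow> ('a \<Rightarrow> 'a) set" where
  "commutant S = {T \<in> bop. \<forall>X\<in>S. T \<circ> X = X \<circ> T}"

text \<open>A von Neumann algebra: a self-adjoint set of bounded operators equal to its
double commutant (equivalently, by the bicommutant theorem, a weak-operator closed
unital *-subalgebra of \<open>\<B>(\<H>)\<close>).\<close>
definition von_neumann_algebra :: "('a::chilbert \<Rightarrow> 'a) set \<Rightarrow> bool" where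
  "von_neumann_algebra M \<longleftrightarrow> M \<subseteq> bop \<and> (\<forall>T\<in>M. adj T \<in> M) \<and> commutant (commutant M) = M"

definition vN_generated :: "('a::chilbert \<Rightarrow> 'a) set \<Rightarrow> ('a \<Rightarrow> 'a) set \<Rightarrow> ('a \<Rightarrow> 'a) set" where
  "vN_generated M S = \<Inter>{N. von_neumann_algebra N \<and> N \<subseteq> M \<and> S \<subseteq> N}"

definition countably_decomposable :: "('a::chilbert \<Rightarrow> 'a) set \<Rightarrow> bool" where
  "countably_decomposable M \<longleftrightarrow>
     (\<forall>F. F \<subseteq> {P \<in> M. is_proj P \<and> P \<noteq> (\<lambda>x. 0)} \<and> (\<forall>P\<in>F. \<forall>Q\<in>F. P \<noteq> Q \<longrightarrow> P \<circ> Q = (\<lambda>x. 0))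
          \<longrightarrow> countable F)"

definition mvn_equiv :: "('a::chilbert \<Rightarrow> 'a) set \<Rightarrow> ('a \<Rightarrow> 'a) \<Rightarrow> ('a \<Rightarrow> 'a) \<Rightarrow> bool" where
  "mvn_equiv M P Q \<longleftrightarrow> (\<exists>V\<in>M. adj V \<circ> V = P \<and> V \<circ> adj V = Q)"

definition infinite_proj :: "('a::chilbert \<Rightarrow> 'a) set \<Rightarrow> ('a \<Rightarrow> 'a) \<Rightarrow> bool" where
  "infinite_proj M P \<longleftrightarrow> (\<exists>Q\<in>M. is_proj Q \<and> Q \<circ> P = Q \<and> Q \<noteq> P \<and> mvn_equiv M P Q)"

definition properly_infinite :: "('a::chilbert \<Rightarrow> 'a) set \<Rightarrow> bool" where
  "properly_infinite M \<longleftrightarrow>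
     (\<forall>C \<in> M \<inter> commutant M. is_proj C \<and> C \<noteq> (\<lambda>x. 0) \<longrightarrow> infinite_proj M C)"

definition faithful_normal_semifinite_trace ::
  "('a::chilbert \<Rightarrow> 'a) set \<Rightarrow> (('a \<Rightarrow> 'a) \<Rightarrow> ennreal) \<Rightarrow> bool" where
  "faithful_normal_semifinite_trace M \<tau> \<longleftrightarrow>
     \<comment> \<open>weight on the positive part \<open>M\<^sub>+\<close>\<close>
     (\<forall>X\<in>M. \<forall>Y\<in>M. positive_op X \<and> positive_op Y \<longrightarrow> \<tau> (\<lambda>x. X x + Y x) = \<tau> X + \<tau> Y) \<and>
     (\<forall>X\<in>M. \<forall>c::real. positive_op X \<and> c \<ge> 0 \<longrightarrow> \<tau> (\<lambda>x. c *\<^sub>R X x) = ennreal c * \<tau> X) \<and>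
     \<comment> \<open>tracial\<close>
     (\<forall>X\<in>M. \<tau> (adj X \<circ> X) = \<tau> (X \<circ> adj X)) \<and>
     \<comment> \<open>faithful\<close>
     (\<forall>X\<in>M. positive_op X \<and> \<tau> X = 0 \<longrightarrow> X = (\<lambda>x. 0)) \<and>
     \<comment> \<open>normal: \<open>\<tau>(sup X\<^sub>i) = sup \<tau>(X\<^sub>i)\<close> for bounded increasing nets in \<open>M\<^sub>+\<close>\<close>
     (\<forall>D X. D \<noteq> {} \<and> D \<subseteq> {Y\<in>M. positive_op Y} \<and>
            (\<forall>Y1\<in>D. \<forall>Y2\<in>D. \<exists>Y3\<in>D. op_le Y1 Y3 \<and> op_le Y2 Y3) \<and>
            (\<forall>Y\<in>D. op_le Y X) \<and>
            (\<forall>Z. (\<forall>Y\<in>D. op_le Y Z) \<longrightarrow> op_le X Z)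
        \<longrightarrow> \<tau> X = (SUP Y\<in>D. \<tau> Y)) \<and>
     \<comment> \<open>semifinite\<close>
     (\<forall>X\<in>M. positive_op X \<and> X \<noteq> (\<lambda>x. 0) \<longrightarrow>
        (\<exists>Y\<in>M. positive_op Y \<and> Y \<noteq> (\<lambda>x. 0) \<and> op_le Y X \<and> \<tau> Y < \<infinity>))"

text \<open>\<open>E\<close> is the spectral resolution of a self-adjoint operator affiliated with \<open>M\<close>:
an increasing, strongly right-continuous family of projections in \<open>M\<close> tending strongly
to \<open>0\<close> at \<open>-\<infinity>\<close> and to \<open>I\<close> at \<open>+\<infinity>\<close>.\<close>
definition affiliated_spectral_resolution ::
  "('a::chilbert \<Rightarrow> 'a) set \<Rightarrow> (real \<Rightarrow> ('a \<Rightarrow> 'a)) \<Rightarrow> bool" where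
  "affiliated_spectral_resolution M E \<longleftrightarrow>
     (\<forall>s. E s \<in> M \<and> is_proj (E s)) \<and>
     (\<forall>s t. s \<le> t \<longrightarrow> E s \<circ> E t = E s) \<and>
     (\<forall>s x. ((\<lambda>u. E u x) \<longlongrightarrow> E s x) (at_right s)) \<and>
     (\<forall>x. ((\<lambda>u. E u x) \<longlongrightarrow> 0) at_bot) \<and>
     (\<forall>x. ((\<lambda>u. E u x) \<longlongrightarrow> x) at_top)"

definition norm_ac_proj ::
  "('a::chilbert \<Rightarrow> 'a) set \<Rightarrow> (real \<Rightarrow> ('a \<Rightarrow> 'a)) \<Rightarrow> ('a \<Rightarrow> 'a) \<Rightarrow> bool" where
  "norm_ac_proj M E P \<longleftrightarrow> P \<in> M \<and> is_proj P \<and>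
     (\<forall>a b \<epsilon>. a < b \<and> \<epsilon> > 0 \<longrightarrow> (\<exists>\<delta>>0.
        \<forall>(n::nat) (aa::nat \<Rightarrow> real) (bb::nat \<Rightarrow> real).
          (\<forall>i<n. a \<le> aa i \<and> aa i < bb i \<and> bb i \<le> b) \<and>
          (\<forall>i<n. \<forall>j<n. i \<noteq> j \<longrightarrow> bb i \<le> aa j \<or> bb j \<le> aa i) \<and>
          (\<Sum>i<n. bb i - aa i) < \<delta>
          \<longrightarrow> (\<Sum>i<n. onorm (\<lambda>x. P (E (bb i) (P x)) - P (E (aa i) (P x)))) < \<epsilon>))"

definition proj_sup :: "('a::chilbert \<Rightarrow> 'a) set \<Rightarrow> ('a \<Rightarrow> 'a)" where
  "proj_sup S = (THE P. is_proj P \<and> (\<forall>Q\<in>S. op_le Q P) \<and>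
                       (\<forall>R. is_proj R \<and> (\<forall>Q\<in>S. op_le Q R) \<longrightarrow> op_le P R))"

definition P_ac_inf :: "('a::chilbert \<Rightarrow> 'a) set \<Rightarrow> (real \<Rightarrow> ('a \<Rightarrow> 'a)) \<Rightarrow> ('a \<Rightarrow> 'a)" where
  "P_ac_inf M E = proj_sup {P. norm_ac_proj M E P}"

end

theory Submission
  imports Defs
begin

(* Write S for the set of norm absolutely continuous projections, so that P^inf_ac(H) is the
   projection onto the closed linear span K of their ranges. Since S is a self-adjoint set,
   K is invariant under S' and its adjoints, so the projection onto K lies in S'' and hence in M.
   For each s, the symmetry V = 2E(s) - I is a self-adjoint unitary of M commuting with every
   E(t), so conjugation by V preserves norm absolute continuity and maps S onto itself; hence
   V leaves K invariant and commutes with P^inf_ac(H), and so does E(s) = (V + I)/2.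
   Consequently P^inf_ac(H) commutes with the range of E, hence with the von Neumann algebra
   it generates. *)

section \<open>Inner product algebra\<close>

lemma cinner_add_left: "cinner ((x::'a::chilbert) + y) z = cinner x z + cinner y z"
  by (metis cinner_add_right cinner_commute complex_cnj_add)

lemma cinner_cscale_left: "cinner (cscale c (x::'a::chilbert)) y = cnj c * cinner x y"
  by (metis cinner_cscale_right cinner_commute complex_cnj_cnj complex_cnj_mult)

lemma cinner_zero_right [simp]: "cinner (x::'a::chilbert) 0 = 0"
  using cinner_add_right[of x 0 0] by simp

lemma cinner_zero_left [simp]: "cinner 0 (x::'a::chilbert) = 0"
  using cinner_add_left[of 0 0 x] by simp

lemma cscale_minus_right: "cscale c (- (x::'a::chilbert)) = - cscale c x"
  by (metis cscale_cscale cscale_of_real mult.commute scaleR_minus1_left)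

lemma cscale_diff_right: "cscale c ((x::'a::chilbert) - y) = cscale c x - cscale c y"
  using cscale_add_right[of c x "-y"] cscale_minus_right[of c y] by simp

lemma cscale_scaleR: "cscale c (scaleR r (x::'a::chilbert)) = scaleR r (cscale c x)"
  by (metis cscale_cscale cscale_of_real mult.commute)

lemma cinner_scaleR_right: "cinner (x::'a::chilbert) (scaleR r y) = complex_of_real r * cinner x y"
  by (metis cinner_cscale_right cscale_of_real)

lemma cinner_scaleR_left: "cinner (scaleR r (x::'a::chilbert)) y = complex_of_real r * cinner x y"
  by (metis cinner_cscale_left cscale_of_real complex_cnj_complex_of_real)

lemma cinner_minus_right: "cinner (x::'a::chilbert) (- y) = - cinner x y"
  using cinner_scaleR_right[of x "-1" y] by simp

lemma cinner_minus_left: "cinner (- (x::'a::chilbert)) y = - cinner x y"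
  using cinner_scaleR_left[of "-1" x y] by simp

lemma cinner_diff_right: "cinner (x::'a::chilbert) (y - z) = cinner x y - cinner x z"
  using cinner_add_right[of x y "-z"] cinner_minus_right[of x z] by simp

lemma cinner_diff_left: "cinner ((x::'a::chilbert) - y) z = cinner x z - cinner y z"
  using cinner_add_left[of x "-y" z] cinner_minus_left[of y z] by simp

lemma cinner_self: "cinner (x::'a::chilbert) x = complex_of_real ((norm x)\<^sup>2)"
  by (rule norm_cinner[symmetric])

lemma cinner_self_eq_0: "cinner (x::'a::chilbert) x = 0 \<longleftrightarrow> x = 0"
  by (simp add: cinner_self)

lemma cinner_orth_commute: "cinner (x::'a::chilbert) y = 0 \<longleftrightarrow> cinner y x = 0"
  by (metis cinner_commute complex_cnj_zero_iff)

lemma cinner_ext: "(\<And>x. cinner x a = cinner x b) \<Longrightarrow> a = (b::'a::chilbert)"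
  by (metis cinner_diff_right cinner_self_eq_0 right_minus_eq)

lemma norm_sq_diff:
  "(norm ((a::'a::chilbert) - b))\<^sup>2 = (norm a)\<^sup>2 + (norm b)\<^sup>2 - 2 * Re (cinner a b)"
proof -
  have "complex_of_real ((norm (a - b))\<^sup>2) = cinner (a - b) (a - b)"
    by (rule norm_cinner)
  also have "\<dots> = cinner a a + cinner b b - cinner a b - cinner b a"
    by (simp add: cinner_diff_left cinner_diff_right)
  finally have "(norm (a - b))\<^sup>2 = Re (cinner a a + cinner b b - cinner a b - cinner b a)"
    by (metis Re_complex_of_real)
  also have "\<dots> = (norm a)\<^sup>2 + (norm b)\<^sup>2 - 2 * Re (cinner a b)"
    using cinner_commute[of b a] by (simp add: cinner_self)
  finally show ?thesis .
qed

lemma norm_sq_add: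
  "(norm ((a::'a::chilbert) + b))\<^sup>2 = (norm a)\<^sup>2 + (norm b)\<^sup>2 + 2 * Re (cinner a b)"
  using norm_sq_diff[of a "-b"] by (simp add: cinner_minus_right)

lemma parallelogram_law:
  "(norm ((a::'a::chilbert) + b))\<^sup>2 + (norm (a - b))\<^sup>2 = 2 * (norm a)\<^sup>2 + 2 * (norm b)\<^sup>2"
  using norm_sq_add[of a b] norm_sq_diff[of a b] by simp

lemma norm_cscale: "norm (cscale c (x::'a::chilbert)) = cmod c * norm x"
proof -
  have "complex_of_real ((norm (cscale c x))\<^sup>2) = cinner (cscale c x) (cscale c x)"
    by (rule norm_cinner)
  also have "\<dots> = (cnj c * c) * cinner x x"
    by (simp add: cinner_cscale_left cinner_cscale_right mult.assoc)
  also have "\<dots> = complex_of_real ((cmod c * norm x)\<^sup>2)"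
    by (simp add: cinner_self complex_norm_square power_mult_distrib mult_ac del: of_real_power)
  finally have "(norm (cscale c x))\<^sup>2 = (cmod c * norm x)\<^sup>2"
    using of_real_eq_iff by blast
  then show ?thesis by (simp add: power2_eq_iff_nonneg)
qed

lemma cauchy_schwarz: "cmod (cinner (x::'a::chilbert) y) \<le> norm x * norm y"
proof (cases "x = 0")
  case True then show ?thesis by simp
next
  case False
  then have nx: "norm x > 0" by simp
  define a where "a = cinner x y / complex_of_real ((norm x)\<^sup>2)"
  define w where "w = y - cscale a x"
  have "cinner x w = 0"
    using nx by (simp add: w_def a_def cinner_diff_right cinner_cscale_right cinner_self)
  then have "cinner w (cscale a x) = 0"
    by (simp add: cinner_cscale_right cinner_orth_commute)
  moreover have "y = w + cscale a x" by (simp add: w_def)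
  ultimately have "(norm y)\<^sup>2 = (norm w)\<^sup>2 + (norm (cscale a x))\<^sup>2"
    using norm_sq_add[of w "cscale a x"] by simp
  then have "(norm (cscale a x))\<^sup>2 \<le> (norm y)\<^sup>2" by simp
  then have "norm (cscale a x) \<le> norm y" by (simp add: power2_le_iff_abs_le)
  moreover have "norm (cscale a x) = cmod (cinner x y) / norm x"
    using nx by (simp add: a_def norm_cscale norm_divide norm_power) (simp add: power2_eq_square)
  ultimately show ?thesis using nx by (simp add: divide_le_eq mult.commute)
qed

lemmas bounded_linear_add = linear_add[OF bounded_linear.linear]
lemmas bounded_linear_diff = linear_diff[OF bounded_linear.linear]
lemmas bounded_linear_scaleR = linear_scale[OF bounded_linear.linear]
lemmas bounded_linear_zero = linear_0[OF bounded_linear.linear]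

section \<open>Orthogonal projection onto a closed subspace\<close>

definition csubspace :: "'a::chilbert set \<Rightarrow> bool" where
  "csubspace K \<longleftrightarrow> 0 \<in> K \<and> (\<forall>x\<in>K. \<forall>y\<in>K. x + y \<in> K) \<and> (\<forall>c. \<forall>x\<in>K. cscale c x \<in> K)"

lemma csubspace_0: "csubspace K \<Longrightarrow> 0 \<in> K"
  by (simp add: csubspace_def)

lemma csubspace_add: "csubspace K \<Longrightarrow> x \<in> K \<Longrightarrow> y \<in> K \<Longrightarrow> x + y \<in> K"
  by (simp add: csubspace_def)

lemma csubspace_cscale: "csubspace K \<Longrightarrow> x \<in> K \<Longrightarrow> cscale c x \<in> K"
  by (simp add: csubspace_def)

lemma csubspace_scaleR: "csubspace K \<Longrightarrow> x \<in> K \<Longrightarrow> scaleR r x \<in> K"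
  by (metis csubspace_cscale cscale_of_real)

lemma csubspace_diff: "csubspace K \<Longrightarrow> x \<in> K \<Longrightarrow> y \<in> K \<Longrightarrow> x - y \<in> K"
  using csubspace_add[of K x "scaleR (-1) y"] csubspace_scaleR[of K y "-1"] by simp

lemma csubspace_vimage:
  assumes "csubspace K" and "T \<in> bop"
  shows "csubspace (T -` K)"
  using assms by (auto simp: csubspace_def bop_def bounded_linear_add bounded_linear_zero)

lemma Cauchy_if_dist_sq_le:
  fixes k :: "nat \<Rightarrow> 'a::metric_space"
  assumes le: "\<And>m n. (dist (k m) (k n))\<^sup>2 \<le> e m + e n" and e: "e \<longlonglongrightarrow> 0"
  shows "Cauchy k"
proof (rule metric_CauchyI)
  fix \<epsilon> :: real
  assume "0 < \<epsilon>"
  then obtain M where M: "\<forall>n\<ge>M. norm (e n - 0) < \<epsilon>\<^sup>2 / 2"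
    using LIMSEQ_D[OF e, of "\<epsilon>\<^sup>2 / 2"] by auto
  have "dist (k m) (k n) < \<epsilon>" if "M \<le> m" "M \<le> n" for m n
  proof -
    have "e m < \<epsilon>\<^sup>2 / 2" "e n < \<epsilon>\<^sup>2 / 2" using M that by auto
    then have "(dist (k m) (k n))\<^sup>2 < \<epsilon>\<^sup>2" using le[of m n] by linarith
    then show ?thesis using \<open>0 < \<epsilon>\<close> by (metis less_le power_less_imp_less_base)
  qed
  then show "\<exists>M. \<forall>m\<ge>M. \<forall>n\<ge>M. dist (k m) (k n) < \<epsilon>" by blast
qed

lemma csubspace_parallelogram_bound:
  fixes K :: "'a::chilbert set"
  assumes cs: "csubspace K" and d: "\<forall>k\<in>K. d \<le> norm (x - k)" "0 \<le> d"
    and a: "a \<in> K" and b: "b \<in> K"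
  shows "(norm (a - b))\<^sup>2 \<le> (2 * (norm (x - a))\<^sup>2 - 2 * d\<^sup>2) + (2 * (norm (x - b))\<^sup>2 - 2 * d\<^sup>2)"
proof -
  have "scaleR (1/2) (a + b) \<in> K" using cs a b by (intro csubspace_scaleR csubspace_add)
  then have "d \<le> norm (x - scaleR (1/2) (a + b))" using d(1) by blast
  also have "x - scaleR (1/2) (a + b) = scaleR (1/2) ((x - a) + (x - b))"
    by (metis scaleR_half_double scaleR_right_diff_distrib add_diff_add)
  finally have "(2 * d)\<^sup>2 \<le> (norm ((x - a) + (x - b)))\<^sup>2"
    using d(2) by (intro power_mono) auto
  moreover have "(x - a) - (x - b) = -(a - b)" by simp
  ultimately show ?thesis
    using parallelogram_law[of "x - a" "x - b"] norm_minus_commute[of a b]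
    by (simp add: power_mult_distrib)
qed

(* A minimising sequence is Cauchy because midpoints of its terms stay in K. *)
lemma closed_csubspace_nearest_point:
  fixes K :: "'a::chilbert set"
  assumes cl: "closed K" and cs: "csubspace K"
  shows "\<exists>p\<in>K. \<forall>k\<in>K. norm (x - p) \<le> norm (x - k)"
proof -
  let ?dist = "\<lambda>k. norm (x - k)"
  define d where "d = Inf (?dist ` K)"
  have ne: "?dist ` K \<noteq> {}" using csubspace_0[OF cs] by blast
  have bdd: "bdd_below (?dist ` K)" by (rule bdd_belowI[of _ 0]) auto
  have dle: "\<forall>k\<in>K. d \<le> ?dist k" unfolding d_def using bdd by (auto intro: cInf_lower)
  have d0: "0 \<le> d" unfolding d_def using ne by (intro cInf_greatest) auto
  have "\<exists>k\<in>K. ?dist k < d + inverse (real (Suc n))" for n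
    using cInf_less_iff[OF ne bdd, of "d + inverse (real (Suc n))"] unfolding d_def by auto
  then obtain k where kK: "\<And>n. k n \<in> K" and kd: "\<And>n. ?dist (k n) < d + inverse (real (Suc n))"
    by metis
  have "\<forall>\<^sub>F n in sequentially. d \<le> ?dist (k n)" using dle kK by simp
  moreover have "\<forall>\<^sub>F n in sequentially. ?dist (k n) \<le> d + inverse (real (Suc n))"
    using kd by (intro always_eventually allI less_imp_le)
  moreover have "(\<lambda>n. d + inverse (real (Suc n))) \<longlonglongrightarrow> d"
    using tendsto_add[OF tendsto_const LIMSEQ_inverse_real_of_nat, of d] by simp
  ultimately have lim: "(\<lambda>n. ?dist (k n)) \<longlonglongrightarrow> d"
    by (rule tendsto_sandwich[OF _ _ tendsto_const])
  have "Cauchy k"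
  proof (rule Cauchy_if_dist_sq_le)
    show "(dist (k m) (k n))\<^sup>2 \<le> (2 * (?dist (k m))\<^sup>2 - 2 * d\<^sup>2) + (2 * (?dist (k n))\<^sup>2 - 2 * d\<^sup>2)"
      for m n
      unfolding dist_norm by (rule csubspace_parallelogram_bound[OF cs dle d0 kK kK])
    have "(\<lambda>n. 2 * (?dist (k n))\<^sup>2 - 2 * d\<^sup>2) \<longlonglongrightarrow> 2 * d\<^sup>2 - 2 * d\<^sup>2"
      by (intro tendsto_intros lim)
    then show "(\<lambda>n. 2 * (?dist (k n))\<^sup>2 - 2 * d\<^sup>2) \<longlonglongrightarrow> 0" by simp
  qed
  then obtain p where kp: "k \<longlonglongrightarrow> p" using Cauchy_convergent_iff convergent_def by blast
  have "p \<in> K" using closed_sequentially[OF cl] kK kp by blast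
  moreover have "(\<lambda>n. ?dist (k n)) \<longlonglongrightarrow> ?dist p" by (intro tendsto_intros kp)
  then have "?dist p = d" using lim LIMSEQ_unique by blast
  ultimately show ?thesis using dle by auto
qed

(* Otherwise moving p along k by the coefficient of x - p on k gets strictly closer to x. *)
lemma nearest_point_orthogonal:
  fixes K :: "'a::chilbert set"
  assumes cs: "csubspace K" and pK: "p \<in> K" and pmin: "\<forall>k\<in>K. norm (x - p) \<le> norm (x - k)"
    and kK: "k \<in> K"
  shows "cinner k (x - p) = 0"
proof (rule ccontr)
  define v where "v = x - p"
  define a where "a = cinner k v"
  assume "cinner k (x - p) \<noteq> 0"
  then have a0: "a \<noteq> 0" by (simp add: a_def v_def)
  then have r0: "0 < norm k" by (auto simp: a_def)
  define w where "w = cscale (a / complex_of_real ((norm k)\<^sup>2)) k"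
  have "p + w \<in> K" unfolding w_def by (intro csubspace_add[OF cs pK] csubspace_cscale[OF cs kK])
  then have "norm v \<le> norm (v - w)" using pmin by (simp add: v_def algebra_simps)
  then have "(norm v)\<^sup>2 \<le> (norm (v - w))\<^sup>2" by (simp add: power_mono)
  then have ineq: "2 * Re (cinner v w) \<le> (norm w)\<^sup>2" by (simp add: norm_sq_diff)
  have "cinner v w = a / complex_of_real ((norm k)\<^sup>2) * cnj a"
    by (simp add: w_def a_def cinner_cscale_right) (metis cinner_commute)
  also have "\<dots> = complex_of_real ((cmod a)\<^sup>2 / (norm k)\<^sup>2)"
    using complex_norm_square[of a, symmetric] by (simp del: of_real_power)
  finally have "Re (cinner v w) = (cmod a)\<^sup>2 / (norm k)\<^sup>2" by simp
  moreover have "(norm w)\<^sup>2 = (cmod a)\<^sup>2 / (norm k)\<^sup>2"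
    using r0 by (simp add: w_def norm_cscale norm_divide norm_mult power2_eq_square)
  moreover have "0 < (cmod a)\<^sup>2 / (norm k)\<^sup>2" using a0 r0 by simp
  ultimately show False using ineq by linarith
qed

definition cproj :: "'a::chilbert set \<Rightarrow> 'a \<Rightarrow> 'a" where
  "cproj K x = (SOME p. p \<in> K \<and> (\<forall>k\<in>K. cinner k (x - p) = 0))"

context
  fixes K :: "'a::chilbert set"
  assumes cl: "closed K" and cs: "csubspace K"
begin

lemma cproj_in_orth: "cproj K x \<in> K \<and> (\<forall>k\<in>K. cinner k (x - cproj K x) = 0)"
proof -
  obtain p where "p \<in> K" "\<forall>k\<in>K. norm (x - p) \<le> norm (x - k)"
    using closed_csubspace_nearest_point[OF cl cs] by blast
  then have "p \<in> K \<and> (\<forall>k\<in>K. cinner k (x - p) = 0)"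
    using nearest_point_orthogonal[OF cs] by blast
  then show ?thesis unfolding cproj_def by (rule someI)
qed

lemma cproj_in: "cproj K x \<in> K"
  using cproj_in_orth by blast

lemma cproj_orth: "k \<in> K \<Longrightarrow> cinner k (x - cproj K x) = 0"
  using cproj_in_orth by blast

lemma cproj_unique:
  assumes pK: "p \<in> K" and po: "\<forall>k\<in>K. cinner k (x - p) = 0"
  shows "cproj K x = p"
proof -
  have d: "cproj K x - p \<in> K" by (rule csubspace_diff[OF cs cproj_in pK])
  have "cinner (cproj K x - p) (cproj K x - p)
      = cinner (cproj K x - p) (x - p) - cinner (cproj K x - p) (x - cproj K x)"
    by (simp add: cinner_diff_right)
  also have "\<dots> = 0" using po cproj_orth d by simp
  finally show ?thesis by (simp add: cinner_self_eq_0)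
qed

lemma cproj_id: "x \<in> K \<Longrightarrow> cproj K x = x"
  by (rule cproj_unique) auto

lemma cproj_add: "cproj K (x + y) = cproj K x + cproj K y"
proof (rule cproj_unique)
  show "cproj K x + cproj K y \<in> K" by (intro csubspace_add[OF cs] cproj_in)
  have e: "x + y - (cproj K x + cproj K y) = (x - cproj K x) + (y - cproj K y)" by simp
  show "\<forall>k\<in>K. cinner k (x + y - (cproj K x + cproj K y)) = 0"
    unfolding e cinner_add_right by (simp add: cproj_orth)
qed

lemma cproj_cscale: "cproj K (cscale c x) = cscale c (cproj K x)"
proof (rule cproj_unique)
  show "cscale c (cproj K x) \<in> K" by (intro csubspace_cscale[OF cs] cproj_in)
  show "\<forall>k\<in>K. cinner k (cscale c x - cscale c (cproj K x)) = 0"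
    using cproj_orth by (simp add: cscale_diff_right[symmetric] cinner_cscale_right)
qed

lemma cproj_norm_le: "norm (cproj K x) \<le> norm x"
proof -
  have "(norm x)\<^sup>2 = (norm (cproj K x))\<^sup>2 + (norm (x - cproj K x))\<^sup>2"
    using norm_sq_add[of "cproj K x" "x - cproj K x"] cproj_orth[OF cproj_in, of x] by simp
  then show ?thesis using power2_le_imp_le[of "norm (cproj K x)" "norm x"] by simp
qed

lemma cproj_sym: "cinner (cproj K x) y = cinner x (cproj K y)"
proof -
  have "cinner (cproj K x) (y - cproj K y) = 0" by (rule cproj_orth[OF cproj_in])
  moreover have "cinner (x - cproj K x) (cproj K y) = 0"
    using cproj_orth[OF cproj_in] cinner_orth_commute by blast
  ultimately show ?thesis by (simp add: cinner_diff_right cinner_diff_left)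
qed

lemma cproj_bop: "cproj K \<in> bop"
  unfolding bop_def
proof (intro CollectI conjI allI)
  show "bounded_linear (cproj K)"
    by (rule bounded_linear_intro[where K=1])
      (auto simp: cproj_add cproj_norm_le cproj_cscale[of "complex_of_real _", unfolded cscale_of_real])
qed (rule cproj_cscale)

end

section \<open>Adjoints\<close>

lemma bop_bounded_linear: "T \<in> bop \<Longrightarrow> bounded_linear T"
  by (simp add: bop_def)

lemma bop_cscale: "T \<in> bop \<Longrightarrow> T (cscale c x) = cscale c (T x)"
  by (simp add: bop_def)

lemma bop_comp: "A \<in> bop \<Longrightarrow> B \<in> bop \<Longrightarrow> A \<circ> B \<in> bop"
  by (auto simp: bop_def comp_def intro: bounded_linear_compose)

lemma bop_diff: "A \<in> bop \<Longrightarrow> B \<in> bop \<Longrightarrow> (\<lambda>x. A x - B x) \<in> bop"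
  by (auto simp: bop_def cscale_diff_right intro: bounded_linear_sub)

lemma adj_eqI:
  assumes "\<And>x y. cinner (T x) y = cinner x (S y)"
  shows "adj T = S"
  unfolding adj_def
proof (rule the_equality)
  fix S' assume "\<forall>x y. cinner (T x) y = cinner x (S' y)"
  then show "S' = S" using assms by (metis cinner_ext ext)
qed (use assms in blast)

lemma riesz_representation:
  fixes f :: "'a::chilbert \<Rightarrow> complex"
  assumes bl: "bounded_linear f" and cl: "\<And>c x. f (cscale c x) = c * f x"
  shows "\<exists>z. \<forall>x. f x = cinner z x"
proof (cases "\<forall>x. f x = 0")
  case True then show ?thesis by (intro exI[of _ 0]) simp
next
  case False
  then obtain w where fw: "f w \<noteq> 0" by blast
  define K where "K = f -` {0}"
  have Kcl: "closed K" unfolding K_def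
    by (rule continuous_closed_vimage) (auto intro: linear_continuous_at bl)
  have Kcs: "csubspace K" unfolding K_def csubspace_def
    using bounded_linear_zero[OF bl] bounded_linear_add[OF bl] cl by auto
  define u where "u = w - cproj K w"
  have uo: "cinner k u = 0" if "k \<in> K" for k using cproj_orth[OF Kcl Kcs that] by (simp add: u_def)
  have fu: "f u = f w" using cproj_in[OF Kcl Kcs, of w]
    by (simp add: u_def bounded_linear_diff[OF bl] K_def)
  have "f x = cinner (cscale (cnj (f u) / complex_of_real ((norm u)\<^sup>2)) u) x" for x
  proof -
    have "x - cscale (f x / f u) u \<in> K" unfolding K_def
      using fu fw by (simp add: bounded_linear_diff[OF bl] cl)
    then have "cinner u (x - cscale (f x / f u) u) = 0" using uo cinner_orth_commute by blast
    then have "cinner u x = f x / f u * complex_of_real ((norm u)\<^sup>2)"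
      by (simp add: cinner_diff_right cinner_cscale_right cinner_self)
    moreover have "u \<noteq> 0" using fu fw bounded_linear_zero[OF bl] by auto
    ultimately show ?thesis using fw fu by (simp add: cinner_cscale_left field_simps)
  qed
  then show ?thesis by blast
qed

lemma adjoint_exists:
  fixes T :: "'a::chilbert \<Rightarrow> 'a"
  assumes T: "T \<in> bop"
  shows "\<exists>S. \<forall>x y. cinner (T x) y = cinner x (S y)"
proof -
  have bl: "bounded_linear T" using T by (rule bop_bounded_linear)
  obtain B where B: "\<And>x. norm (T x) \<le> norm x * B" using bounded_linear.bounded[OF bl] by blast
  have "\<exists>z. \<forall>x. cinner (T x) y = cinner x z" for y
  proof -
    have "bounded_linear (\<lambda>x. cinner y (T x))"
    proof (rule bounded_linear_intro[where K="norm y * B"])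
      show "cinner y (T (x + z)) = cinner y (T x) + cinner y (T z)" for x z
        by (simp add: bounded_linear_add[OF bl] cinner_add_right)
      show "cinner y (T (scaleR r x)) = scaleR r (cinner y (T x))" for r x
        by (simp add: bounded_linear_scaleR[OF bl] cinner_scaleR_right scaleR_conv_of_real)
      show "norm (cinner y (T x)) \<le> norm x * (norm y * B)" for x
        using cauchy_schwarz[of y "T x"] mult_left_mono[OF B[of x] norm_ge_zero[of y]]
        by (simp add: mult_ac)
    qed
    moreover have "cinner y (T (cscale c x)) = c * cinner y (T x)" for c x
      by (simp add: bop_cscale[OF T] cinner_cscale_right)
    ultimately obtain z where "\<forall>x. cinner y (T x) = cinner z x"
      using riesz_representation by blast
    then show ?thesis by (metis cinner_commute)
  qed
  then show ?thesis by metis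
qed

lemma cinner_adj: "T \<in> bop \<Longrightarrow> cinner (T x) y = cinner x (adj T y)"
  by (metis adj_eqI adjoint_exists)

lemma adj_bop:
  fixes T :: "'a::chilbert \<Rightarrow> 'a"
  assumes T: "T \<in> bop"
  shows "adj T \<in> bop"
proof -
  let ?S = "adj T"
  obtain B where B: "\<And>x. norm (T x) \<le> norm x * B" and Bp: "B > 0"
    using bounded_linear.pos_bounded[OF bop_bounded_linear[OF T]] by blast
  have add: "?S (a + b) = ?S a + ?S b" for a b
    by (rule cinner_ext) (simp add: cinner_adj[OF T, symmetric] cinner_add_right)
  have cs: "?S (cscale c a) = cscale c (?S a)" for c a
    by (rule cinner_ext) (simp add: cinner_adj[OF T, symmetric] cinner_cscale_right)
  have bd: "norm (?S y) \<le> norm y * B" for y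
  proof -
    have "(norm (?S y))\<^sup>2 = Re (cinner (T (?S y)) y)"
      by (simp add: cinner_adj[OF T] cinner_self)
    also have "\<dots> \<le> norm (T (?S y)) * norm y"
      using cauchy_schwarz complex_Re_le_cmod order_trans by blast
    also have "\<dots> \<le> norm (?S y) * (norm y * B)"
      using mult_right_mono[OF B norm_ge_zero] by (simp add: mult_ac)
    finally show ?thesis
      using Bp by (cases "?S y = 0") (auto simp: power2_eq_square mult_le_cancel_left)
  qed
  have "bounded_linear ?S"
    by (rule bounded_linear_intro[where K=B])
      (auto simp: add bd cs[of "complex_of_real _", unfolded cscale_of_real])
  then show ?thesis using cs by (simp add: bop_def)
qed

lemma adj_adj: "T \<in> bop \<Longrightarrow> adj (adj T) = T"
  by (rule adj_eqI) (metis cinner_adj cinner_commute)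

lemma adj_comp: "A \<in> bop \<Longrightarrow> B \<in> bop \<Longrightarrow> adj (A \<circ> B) = adj B \<circ> adj A"
  by (rule adj_eqI) (simp add: cinner_adj)

section \<open>Orthogonal projections and their supremum\<close>

lemma proj_bop: "is_proj Q \<Longrightarrow> Q \<in> bop"
  by (simp add: is_proj_def)

lemma proj_idem: "is_proj Q \<Longrightarrow> Q (Q x) = Q x"
  by (metis comp_apply is_proj_def)

lemma proj_sym: "is_proj Q \<Longrightarrow> cinner (Q x) y = cinner x (Q y)"
  by (metis cinner_adj is_proj_def)

lemma proj_cinner_self: "is_proj P \<Longrightarrow> cinner x (P x) = complex_of_real ((norm (P x))\<^sup>2)"
  by (metis cinner_self proj_idem proj_sym)

lemma cproj_is_proj: "closed K \<Longrightarrow> csubspace K \<Longrightarrow> is_proj (cproj K)"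
  unfolding is_proj_def
  by (simp add: cproj_bop cproj_id cproj_in comp_def adj_eqI cproj_sym)

lemma proj_norm_le: "is_proj Q \<Longrightarrow> norm (Q x) \<le> norm x"
proof -
  assume Q: "is_proj Q"
  then have "cinner (Q x) (x - Q x) = 0"
    by (simp add: proj_sym cinner_diff_right proj_idem)
  then have "(norm x)\<^sup>2 = (norm (Q x))\<^sup>2 + (norm (x - Q x))\<^sup>2"
    using norm_sq_add[of "Q x" "x - Q x"] by simp
  then show ?thesis using power2_le_imp_le[of "norm (Q x)" "norm x"] by simp
qed

lemma proj_eqI:
  assumes P: "is_proj P" and Q: "is_proj Q"
    and "\<And>x. P (Q x) = Q x" and "\<And>x. Q (P x) = P x"
  shows "P = Q"
proof
  fix x
  show "P x = Q x"
  proof (rule cinner_ext)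
    fix y
    have "cinner y (P x) = cinner (Q (P y)) x" using assms(4) proj_sym[OF P] by metis
    also have "\<dots> = cinner y (P (Q x))" using proj_sym[OF P] proj_sym[OF Q] by metis
    also have "\<dots> = cinner y (Q x)" using assms(3) by simp
    finally show "cinner y (P x) = cinner y (Q x)" .
  qed
qed

lemma proj_le_iff:
  fixes Q R :: "'a::chilbert \<Rightarrow> 'a"
  assumes Q: "is_proj Q" and R: "is_proj R"
  shows "op_le Q R \<longleftrightarrow> (\<forall>x. R (Q x) = Q x)"
proof
  assume le: "op_le Q R"
  show "\<forall>x. R (Q x) = Q x"
  proof
    fix x
    let ?y = "Q x"
    have "0 \<le> Re (cinner ?y (R ?y - Q ?y))" using le by (simp add: op_le_def positive_op_def)
    also have "cinner ?y (R ?y - Q ?y) = complex_of_real ((norm (R ?y))\<^sup>2 - (norm ?y)\<^sup>2)"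
      by (simp add: cinner_diff_right proj_cinner_self[OF R] proj_idem[OF Q] cinner_self)
    finally have "(norm ?y)\<^sup>2 \<le> (norm (R ?y))\<^sup>2" by simp
    moreover have "cinner (R ?y) (?y - R ?y) = 0"
      by (simp add: proj_sym[OF R] cinner_diff_right proj_idem[OF R])
    then have "(norm ?y)\<^sup>2 = (norm (R ?y))\<^sup>2 + (norm (?y - R ?y))\<^sup>2"
      using norm_sq_add[of "R ?y" "?y - R ?y"] by simp
    ultimately show "R ?y = ?y" by simp
  qed
next
  assume h: "\<forall>x. R (Q x) = Q x"
  have "Q (R x) = Q x" for x
    by (rule cinner_ext) (metis h proj_sym[OF Q] proj_sym[OF R])
  then have "norm (Q x) \<le> norm (R x)" for x by (metis proj_norm_le[OF Q])
  then have "(norm (Q x))\<^sup>2 \<le> (norm (R x))\<^sup>2" for x by (simp add: power_mono)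
  then have "positive_op (\<lambda>x. R x - Q x)"
    using bop_diff[OF proj_bop[OF R] proj_bop[OF Q]]
    by (simp add: positive_op_def cinner_diff_right proj_cinner_self[OF Q] proj_cinner_self[OF R])
  then show "op_le Q R" using Q R by (simp add: op_le_def is_proj_def)
qed

definition closed_span_ranges :: "('a::chilbert \<Rightarrow> 'a) set \<Rightarrow> 'a set" where
  "closed_span_ranges S = \<Inter>{F. closed F \<and> csubspace F \<and> (\<forall>Q\<in>S. range Q \<subseteq> F)}"

lemma closed_closed_span_ranges: "closed (closed_span_ranges S)"
  unfolding closed_span_ranges_def by (rule closed_Inter) auto

lemma csubspace_closed_span_ranges: "csubspace (closed_span_ranges S)"
  unfolding closed_span_ranges_def csubspace_def
  by (auto simp: csubspace_0 csubspace_add csubspace_cscale)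

lemma range_subset_closed_span_ranges: "Q \<in> S \<Longrightarrow> Q x \<in> closed_span_ranges S"
  unfolding closed_span_ranges_def by auto

lemma closed_span_ranges_least:
  "closed F \<Longrightarrow> csubspace F \<Longrightarrow> (\<And>Q x. Q \<in> S \<Longrightarrow> Q x \<in> F) \<Longrightarrow> closed_span_ranges S \<subseteq> F"
  unfolding closed_span_ranges_def by blast

lemmas closed_csubspace_span_ranges = closed_closed_span_ranges csubspace_closed_span_ranges

lemma proj_sup_eq_cproj:
  assumes S: "\<forall>Q\<in>S. is_proj Q"
  shows "proj_sup S = cproj (closed_span_ranges S)"
proof -
  let ?P = "cproj (closed_span_ranges S)"
  have P: "is_proj ?P" by (rule cproj_is_proj[OF closed_csubspace_span_ranges])
  have ub: "op_le Q ?P" if Q: "Q \<in> S" for Q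
  proof -
    have "?P (Q x) = Q x" for x
      by (intro cproj_id closed_csubspace_span_ranges range_subset_closed_span_ranges Q)
    then show ?thesis using proj_le_iff[OF _ P] S Q by auto
  qed
  have least: "op_le ?P R" if R: "is_proj R" and ubR: "\<forall>Q\<in>S. op_le Q R" for R
  proof -
    have "closed {x. R x = x}"
      by (intro closed_Collect_eq linear_continuous_on continuous_on_id
          bop_bounded_linear proj_bop R)
    moreover have "csubspace {x. R x = x}"
      using proj_bop[OF R] by (auto simp: csubspace_def bop_def bounded_linear_add bounded_linear_zero)
    moreover have "Q x \<in> {x. R x = x}" if "Q \<in> S" for Q x
      using that ubR S proj_le_iff[OF _ R] by auto
    ultimately have "closed_span_ranges S \<subseteq> {x. R x = x}"
      by (rule closed_span_ranges_least)
    then show ?thesis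
      using proj_le_iff[OF P R] cproj_in[OF closed_csubspace_span_ranges] by auto
  qed
  show ?thesis unfolding proj_sup_def
  proof (rule the_equality)
    fix P' assume P': "is_proj P' \<and> (\<forall>Q\<in>S. op_le Q P') \<and> (\<forall>R. is_proj R \<and> (\<forall>Q\<in>S. op_le Q R) \<longrightarrow> op_le P' R)"
    then show "P' = ?P"
      using P ub least proj_le_iff[OF _ P] proj_le_iff[OF P] by (intro proj_eqI) blast+
  qed (use P ub least in blast)
qed

lemma proj_sup_is_proj: "\<forall>Q\<in>S. is_proj Q \<Longrightarrow> is_proj (proj_sup S)"
  by (simp add: proj_sup_eq_cproj cproj_is_proj closed_csubspace_span_ranges)

lemma closed_span_ranges_invariant:
  assumes T: "T \<in> bop" and TQ: "\<And>Q x. Q \<in> S \<Longrightarrow> T (Q x) \<in> closed_span_ranges S"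
    and x: "x \<in> closed_span_ranges S"
  shows "T x \<in> closed_span_ranges S"
proof -
  have "closed (T -` closed_span_ranges S)"
    by (intro continuous_closed_vimage closed_closed_span_ranges
        linear_continuous_at bop_bounded_linear T)
  moreover have "csubspace (T -` closed_span_ranges S)"
    by (intro csubspace_vimage csubspace_closed_span_ranges T)
  ultimately have "closed_span_ranges S \<subseteq> T -` closed_span_ranges S"
    using TQ by (intro closed_span_ranges_least) auto
  then show ?thesis using x by blast
qed

lemma cproj_commute_if_invariant:
  fixes K :: "'a::chilbert set"
  assumes K: "closed K" "csubspace K" and T: "T \<in> bop"
    and TK: "\<And>x. x \<in> K \<Longrightarrow> T x \<in> K" and aTK: "\<And>x. x \<in> K \<Longrightarrow> adj T x \<in> K"
  shows "T \<circ> cproj K = cproj K \<circ> T"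
proof -
  let ?P = "cproj K"
  have P: "?P \<in> bop" "adj ?P = ?P" using cproj_is_proj[OF K] by (auto simp: is_proj_def)
  have aT: "adj T \<in> bop" by (rule adj_bop[OF T])
  have compress: "adj T \<circ> ?P = ?P \<circ> adj T \<circ> ?P" "T \<circ> ?P = ?P \<circ> T \<circ> ?P"
    using aTK TK cproj_in[OF K] cproj_id[OF K] by (auto simp: fun_eq_iff)
  have "?P \<circ> T = adj (adj T \<circ> ?P)" by (simp add: adj_comp aT P adj_adj T)
  also have "\<dots> = adj (?P \<circ> adj T \<circ> ?P)" by (simp only: compress(1))
  also have "\<dots> = ?P \<circ> T \<circ> ?P" by (simp add: adj_comp aT P adj_adj T bop_comp o_assoc)
  also have "\<dots> = T \<circ> ?P" by (simp only: compress(2))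
  finally show ?thesis by (rule sym)
qed

lemma proj_sup_commute:
  assumes S: "\<forall>Q\<in>S. is_proj Q" and T: "T \<in> bop"
    and TQ: "\<And>Q x. Q \<in> S \<Longrightarrow> T (Q x) \<in> closed_span_ranges S"
    and aTQ: "\<And>Q x. Q \<in> S \<Longrightarrow> adj T (Q x) \<in> closed_span_ranges S"
  shows "T \<circ> proj_sup S = proj_sup S \<circ> T"
  unfolding proj_sup_eq_cproj[OF S]
proof (rule cproj_commute_if_invariant[OF closed_csubspace_span_ranges T])
  show "T x \<in> closed_span_ranges S" if "x \<in> closed_span_ranges S" for x
    by (rule closed_span_ranges_invariant[where T=T and S=S, OF T _ that]) (erule TQ)
  show "adj T x \<in> closed_span_ranges S" if "x \<in> closed_span_ranges S" for x
    by (rule closed_span_ranges_invariant[where T="adj T" and S=S, OF adj_bop[OF T] _ that]) (erule aTQ)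
qed

section \<open>Commutants and von Neumann algebras\<close>

lemma commutant_subset_bop: "commutant A \<subseteq> bop"
  by (auto simp: commutant_def)

lemma commutant_antimono: "A \<subseteq> B \<Longrightarrow> commutant B \<subseteq> commutant A"
  by (auto simp: commutant_def)

lemma subset_double_commutant: "A \<subseteq> bop \<Longrightarrow> A \<subseteq> commutant (commutant A)"
  by (auto simp: commutant_def)

lemma triple_commutant: "A \<subseteq> bop \<Longrightarrow> commutant (commutant (commutant A)) = commutant A"
  by (intro equalityI commutant_antimono subset_double_commutant commutant_subset_bop)

lemma adj_in_commutant:
  assumes A: "\<And>X. X \<in> A \<Longrightarrow> X \<in> bop \<and> adj X \<in> A" and T: "T \<in> commutant A"
  shows "adj T \<in> commutant A"
proof -
  have Tb: "T \<in> bop" using T by (simp add: commutant_def)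
  have "adj T \<circ> X = X \<circ> adj T" if X: "X \<in> A" for X
  proof -
    have "T \<circ> adj X = adj X \<circ> T" using T A[OF X] by (simp add: commutant_def)
    then have "adj (adj X \<circ> T) = adj (T \<circ> adj X)" by simp
    then show ?thesis using A[OF X] A[of "adj X"] X by (simp add: adj_comp Tb adj_adj)
  qed
  then show ?thesis using adj_bop[OF Tb] by (simp add: commutant_def)
qed

lemma von_neumann_algebra_double_commutant:
  assumes "\<And>X. X \<in> A \<Longrightarrow> X \<in> bop \<and> adj X \<in> A"
  shows "von_neumann_algebra (commutant (commutant A))"
proof -
  have C: "\<And>X. X \<in> commutant A \<Longrightarrow> X \<in> bop \<and> adj X \<in> commutant A"
    using assms adj_in_commutant commutant_subset_bop by blast
  have "adj X \<in> commutant (commutant A)" if "X \<in> commutant (commutant A)" for X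
    using adj_in_commutant[OF C that] .
  moreover have "commutant (commutant (commutant (commutant A))) = commutant (commutant A)"
    by (rule triple_commutant[OF commutant_subset_bop])
  ultimately show ?thesis
    unfolding von_neumann_algebra_def using commutant_subset_bop by blast
qed

lemma vN_generated_subset_double_commutant:
  assumes M: "von_neumann_algebra M" and AM: "A \<subseteq> M"
    and A: "\<And>X. X \<in> A \<Longrightarrow> adj X \<in> A"
  shows "vN_generated M A \<subseteq> commutant (commutant A)"
proof -
  have Ab: "A \<subseteq> bop" using M AM by (auto simp: von_neumann_algebra_def)
  have "commutant (commutant A) \<subseteq> commutant (commutant M)"
    using AM by (intro commutant_antimono)
  then have "commutant (commutant A) \<subseteq> M" using M by (simp add: von_neumann_algebra_def)
  moreover have "von_neumann_algebra (commutant (commutant A))"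
    using A Ab by (intro von_neumann_algebra_double_commutant) auto
  ultimately show ?thesis
    unfolding vN_generated_def using subset_double_commutant[OF Ab] by blast
qed

lemma von_neumann_algebra_memI:
  assumes "von_neumann_algebra M" and "T \<in> bop" and "\<And>Y. Y \<in> commutant M \<Longrightarrow> T \<circ> Y = Y \<circ> T"
  shows "T \<in> M"
  using assms by (auto simp: von_neumann_algebra_def commutant_def)

lemma von_neumann_algebra_comp:
  assumes M: "von_neumann_algebra M" and "A \<in> M" "B \<in> M"
  shows "A \<circ> B \<in> M"
proof (rule von_neumann_algebra_memI[OF M])
  show "A \<circ> B \<in> bop" using assms by (auto simp: von_neumann_algebra_def intro: bop_comp)
  fix Y assume "Y \<in> commutant M"
  then have "A \<circ> Y = Y \<circ> A" "B \<circ> Y = Y \<circ> B" using assms by (auto simp: commutant_def)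
  then show "A \<circ> B \<circ> Y = Y \<circ> (A \<circ> B)" by (metis o_assoc)
qed

lemma proj_sup_in_double_commutant:
  assumes S: "\<forall>Q\<in>S. is_proj Q"
  shows "proj_sup S \<in> commutant (commutant S)"
proof -
  have SA: "\<And>X. X \<in> S \<Longrightarrow> X \<in> bop \<and> adj X \<in> S" using S by (simp add: is_proj_def)
  have "T \<circ> proj_sup S = proj_sup S \<circ> T" if T: "T \<in> commutant S" for T
  proof (rule proj_sup_commute[OF S])
    show "T \<in> bop" using T by (simp add: commutant_def)
    have "X (Q x) \<in> closed_span_ranges S" if X: "X \<in> commutant S" and Q: "Q \<in> S" for X Q x
    proof -
      have "X \<circ> Q = Q \<circ> X" using X Q by (simp add: commutant_def)
      then have "X (Q x) = Q (X x)" by (simp add: fun_eq_iff)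
      then show ?thesis by (simp add: range_subset_closed_span_ranges[OF Q])
    qed
    then show "Q \<in> S \<Longrightarrow> T (Q x) \<in> closed_span_ranges S"
      and "Q \<in> S \<Longrightarrow> adj T (Q x) \<in> closed_span_ranges S" for Q x
      using T adj_in_commutant[OF SA T] by blast+
  qed
  then show ?thesis
    using proj_bop[OF proj_sup_is_proj[OF S]] by (auto simp: commutant_def)
qed

lemma proj_sup_commute_self_adjoint_involution:
  assumes S: "\<forall>Q\<in>S. is_proj Q" and V: "V \<in> bop" "adj V = V" "\<And>x. V (V x) = x"
    and SV: "\<And>Q. Q \<in> S \<Longrightarrow> V \<circ> Q \<circ> V \<in> S"
  shows "V \<circ> proj_sup S = proj_sup S \<circ> V"
proof (rule proj_sup_commute[OF S V(1)])
  fix Q x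
  assume "Q \<in> S"
  then have "(V \<circ> Q \<circ> V) (V x) \<in> closed_span_ranges S"
    using SV range_subset_closed_span_ranges by blast
  then show "V (Q x) \<in> closed_span_ranges S" "adj V (Q x) \<in> closed_span_ranges S"
    using V by simp_all
qed

section \<open>Symmetries and norm absolute continuity\<close>

definition reflection :: "('a::chilbert \<Rightarrow> 'a) \<Rightarrow> 'a \<Rightarrow> 'a" where
  "reflection P = (\<lambda>x. scaleR 2 (P x) - x)"

lemma reflection_bop: "P \<in> bop \<Longrightarrow> reflection P \<in> bop"
  unfolding reflection_def bop_def
  by (auto simp: cscale_diff_right cscale_scaleR
      intro!: bounded_linear_sub bounded_linear_compose[OF bounded_linear_scaleR_right])

lemma adj_reflection: "is_proj P \<Longrightarrow> adj (reflection P) = reflection P"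
  by (rule adj_eqI)
    (simp add: reflection_def cinner_diff_left cinner_diff_right cinner_scaleR_left
      cinner_scaleR_right proj_sym)

lemma reflection_involutive:
  assumes "is_proj P"
  shows "reflection P (reflection P x) = x"
proof -
  have bl: "bounded_linear P" by (rule bop_bounded_linear[OF proj_bop[OF assms]])
  show ?thesis
    by (simp add: reflection_def bounded_linear_diff[OF bl] bounded_linear_scaleR[OF bl]
        bounded_linear_add[OF bl] proj_idem[OF assms] algebra_simps scaleR_2)
qed

lemma reflection_commute:
  assumes "A \<in> bop" and "P \<circ> A = A \<circ> P"
  shows "reflection P \<circ> A = A \<circ> reflection P"
  using assms bop_bounded_linear[OF assms(1)]
  by (auto simp: fun_eq_iff reflection_def bounded_linear_diff bounded_linear_scaleR)

lemma commute_if_reflection_commute: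
  assumes P: "P \<in> bop" and A: "A \<in> bop" and "reflection P \<circ> A = A \<circ> reflection P"
  shows "P \<circ> A = A \<circ> P"
proof
  fix x
  have half: "P y = scaleR (1/2) (reflection P y + y)" for y
    by (simp add: reflection_def)
  have "P (A x) = scaleR (1/2) (A (reflection P x) + A x)"
    using assms(3) half[of "A x"] by (metis comp_apply)
  also have "\<dots> = A (P x)"
    using bop_bounded_linear[OF A] half[of x] by (simp add: bounded_linear_add bounded_linear_scaleR)
  finally show "(P \<circ> A) x = (A \<circ> P) x" by simp
qed

lemma reflection_in_von_neumann_algebra:
  assumes M: "von_neumann_algebra M" and P: "P \<in> M"
  shows "reflection P \<in> M"
proof (rule von_neumann_algebra_memI[OF M])
  show "reflection P \<in> bop" using M P by (auto simp: von_neumann_algebra_def intro: reflection_bop)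
  fix Y assume "Y \<in> commutant M"
  then show "reflection P \<circ> Y = Y \<circ> reflection P"
    using P by (intro reflection_commute) (auto simp: commutant_def)
qed

lemma norm_self_adjoint_involution:
  assumes "V \<in> bop" "adj V = V" "\<And>x. V (V x) = x"
  shows "norm (V x) = norm x"
proof -
  have "complex_of_real ((norm (V x))\<^sup>2) = complex_of_real ((norm x)\<^sup>2)"
    using cinner_adj[OF assms(1), of x "V x"] assms by (simp add: cinner_self)
  then have "(norm (V x))\<^sup>2 = (norm x)\<^sup>2" using of_real_eq_iff by blast
  then show ?thesis by (simp add: power2_eq_iff_nonneg)
qed

lemma onorm_conj_isometry_le:
  assumes D: "bounded_linear D" and V: "\<And>x. norm (V x) = norm x"
  shows "onorm (\<lambda>x. V (D (V x))) \<le> onorm D"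
proof (rule onorm_bound[OF onorm_pos_le[OF D]])
  fix x
  show "norm (V (D (V x))) \<le> onorm D * norm x"
    using onorm[OF D, of "V x"] by (simp add: V)
qed

lemma is_proj_conj_self_adjoint_involution:
  assumes Q: "is_proj Q" and V: "V \<in> bop" "adj V = V" "\<And>x. V (V x) = x"
  shows "is_proj (V \<circ> Q \<circ> V)"
  unfolding is_proj_def
proof (intro conjI)
  have Qb: "Q \<in> bop" and Qa: "adj Q = Q" using Q by (auto simp: is_proj_def)
  show "V \<circ> Q \<circ> V \<in> bop" by (intro bop_comp V(1) Qb)
  show "V \<circ> Q \<circ> V \<circ> (V \<circ> Q \<circ> V) = V \<circ> Q \<circ> V"
    by (simp add: fun_eq_iff V(3) proj_idem[OF Q])
  show "adj (V \<circ> Q \<circ> V) = V \<circ> Q \<circ> V"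
    by (simp add: adj_comp bop_comp V(1,2) Qb Qa o_assoc)
qed

definition disjoint_subintervals :: "real \<Rightarrow> real \<Rightarrow> nat \<Rightarrow> (nat \<Rightarrow> real) \<Rightarrow> (nat \<Rightarrow> real) \<Rightarrow> bool" where
  "disjoint_subintervals a b n aa bb \<longleftrightarrow>
     (\<forall>i<n. a \<le> aa i \<and> aa i < bb i \<and> bb i \<le> b) \<and>
     (\<forall>i<n. \<forall>j<n. i \<noteq> j \<longrightarrow> bb i \<le> aa j \<or> bb j \<le> aa i)"

definition interval_ac :: "(real \<Rightarrow> real \<Rightarrow> real) \<Rightarrow> bool" where
  "interval_ac F \<longleftrightarrow> (\<forall>a b \<epsilon>. a < b \<and> \<epsilon> > 0 \<longrightarrow> (\<exists>\<delta>>0. \<forall>n aa bb.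
     disjoint_subintervals a b n aa bb \<and> (\<Sum>i<n. bb i - aa i) < \<delta>
       \<longrightarrow> (\<Sum>i<n. F (aa i) (bb i)) < \<epsilon>))"

lemma norm_ac_proj_iff:
  "norm_ac_proj M E P \<longleftrightarrow>
     P \<in> M \<and> is_proj P \<and> interval_ac (\<lambda>s t. onorm (\<lambda>x. P (E t (P x)) - P (E s (P x))))"
  by (simp add: norm_ac_proj_def interval_ac_def disjoint_subintervals_def conj_assoc)

lemma interval_ac_mono:
  assumes F: "interval_ac F" and le: "\<And>s t. G s t \<le> F s t"
  shows "interval_ac G"
  unfolding interval_ac_def
proof (intro allI impI)
  fix a b \<epsilon> :: real
  assume "a < b \<and> \<epsilon> > 0"
  with F obtain \<delta> where "\<delta> > 0" and \<delta>: "\<And>n aa bb. disjoint_subintervals a b n aa bb \<Longrightarrow>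
      (\<Sum>i<n. bb i - aa i) < \<delta> \<Longrightarrow> (\<Sum>i<n. F (aa i) (bb i)) < \<epsilon>"
    unfolding interval_ac_def by meson
  have "(\<Sum>i<n. G (aa i) (bb i)) < \<epsilon>"
    if "disjoint_subintervals a b n aa bb" "(\<Sum>i<n. bb i - aa i) < \<delta>" for n aa bb
    using sum_mono[of "{..<n}", OF le] \<delta>[OF that] by (rule order.strict_trans1)
  with \<open>\<delta> > 0\<close> show "\<exists>\<delta>>0. \<forall>n aa bb. disjoint_subintervals a b n aa bb \<and> (\<Sum>i<n. bb i - aa i) < \<delta>
      \<longrightarrow> (\<Sum>i<n. G (aa i) (bb i)) < \<epsilon>"
    by blast
qed
lemma norm_ac_proj_conj:
  assumes M: "von_neumann_algebra M" and Q: "norm_ac_proj M E Q"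
    and V: "V \<in> M" "adj V = V" "\<And>x. V (V x) = x"
    and VE: "\<And>t. V \<circ> E t = E t \<circ> V" and E: "\<And>t. E t \<in> bop"
  shows "norm_ac_proj M E (V \<circ> Q \<circ> V)"
proof -
  let ?W = "V \<circ> Q \<circ> V"
  have QM: "Q \<in> M" and Qp: "is_proj Q"
    and Qac: "interval_ac (\<lambda>s t. onorm (\<lambda>x. Q (E t (Q x)) - Q (E s (Q x))))"
    using Q by (auto simp: norm_ac_proj_iff)
  have Vb: "V \<in> bop" using M V by (auto simp: von_neumann_algebra_def)
  have VEV: "V (E t (V y)) = E t y" for t y
    using fun_cong[OF VE[of t], of "V y"] V(3) by simp
  have "onorm (\<lambda>x. ?W (E t (?W x)) - ?W (E s (?W x)))
      \<le> onorm (\<lambda>x. Q (E t (Q x)) - Q (E s (Q x)))" for s t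
  proof -
    let ?D = "\<lambda>x. Q (E t (Q x)) - Q (E s (Q x))"
    have Q: "bounded_linear Q" by (rule bop_bounded_linear[OF proj_bop[OF Qp]])
    have QEQ: "bounded_linear (\<lambda>x. Q (E r (Q x)))" for r
      by (rule bounded_linear_compose[OF Q bounded_linear_compose[OF bop_bounded_linear[OF E] Q]])
    have D: "bounded_linear ?D" by (rule bounded_linear_sub[OF QEQ QEQ])
    have "(\<lambda>x. ?W (E t (?W x)) - ?W (E s (?W x))) = (\<lambda>x. V (?D (V x)))"
      by (simp add: VEV bounded_linear_diff[OF bop_bounded_linear[OF Vb]])
    then show ?thesis
      using onorm_conj_isometry_le[OF D norm_self_adjoint_involution[OF Vb V(2,3)]] by simp
  qed
  then have "interval_ac (\<lambda>s t. onorm (\<lambda>x. ?W (E t (?W x)) - ?W (E s (?W x))))"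
    by (rule interval_ac_mono[OF Qac])
  moreover have "?W \<in> M" by (intro von_neumann_algebra_comp[OF M] V QM)
  moreover have "is_proj ?W" by (rule is_proj_conj_self_adjoint_involution[OF Qp Vb V(2,3)])
  ultimately show ?thesis by (simp add: norm_ac_proj_iff)
qed

lemma affiliated_spectral_resolution_commute:
  assumes E: "affiliated_spectral_resolution M E"
  shows "E s \<circ> E t = E t \<circ> E s"
proof -
  have Ep: "is_proj (E r)" for r using E by (simp add: affiliated_spectral_resolution_def)
  have le: "E t \<circ> E s = E s \<circ> E t" if "s \<le> t" for s t
  proof -
    have st: "E s \<circ> E t = E s" using E that by (simp add: affiliated_spectral_resolution_def)
    have "E t \<circ> E s = adj (E s \<circ> E t)" using Ep by (simp add: adj_comp is_proj_def)
    also have "\<dots> = E s" using st Ep by (simp add: is_proj_def)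
    finally show ?thesis using st by simp
  qed
  show ?thesis using le[of s t] le[of t s] by (cases "s \<le> t") auto
qed

lemma norm_ac_projs_are_projs: "\<forall>Q\<in>{Q. norm_ac_proj M E Q}. is_proj Q"
  by (simp add: norm_ac_proj_def)

lemma is_proj_P_ac_inf: "is_proj (P_ac_inf M E)"
  unfolding P_ac_inf_def by (rule proj_sup_is_proj[OF norm_ac_projs_are_projs])

lemma P_ac_inf_in_von_neumann_algebra:
  assumes M: "von_neumann_algebra M"
  shows "P_ac_inf M E \<in> M"
proof -
  have "commutant (commutant {Q. norm_ac_proj M E Q}) \<subseteq> commutant (commutant M)"
    by (intro commutant_antimono) (auto simp: norm_ac_proj_def)
  then show ?thesis
    using proj_sup_in_double_commutant[OF norm_ac_projs_are_projs] M
    by (auto simp: P_ac_inf_def von_neumann_algebra_def)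
qed

lemma P_ac_inf_commute_spectral_projection:
  assumes M: "von_neumann_algebra M" and E: "affiliated_spectral_resolution M E"
  shows "P_ac_inf M E \<circ> E s = E s \<circ> P_ac_inf M E"
proof -
  let ?S = "{Q. norm_ac_proj M E Q}" and ?V = "reflection (E s)"
  have Ep: "is_proj (E t)" and EM: "E t \<in> M" for t
    using E by (auto simp: affiliated_spectral_resolution_def)
  have V: "?V \<in> M" "adj ?V = ?V" "\<And>x. ?V (?V x) = x"
    using reflection_in_von_neumann_algebra[OF M EM] adj_reflection[OF Ep]
      reflection_involutive[OF Ep] by auto
  have "?V \<circ> E t = E t \<circ> ?V" for t
    by (intro reflection_commute proj_bop Ep affiliated_spectral_resolution_commute[OF E])
  then have "?V \<circ> Q \<circ> ?V \<in> ?S" if "Q \<in> ?S" for Q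
    using that norm_ac_proj_conj[OF M _ V] proj_bop[OF Ep] by auto
  then have "?V \<circ> proj_sup ?S = proj_sup ?S \<circ> ?V"
    by (rule proj_sup_commute_self_adjoint_involution[OF norm_ac_projs_are_projs
          reflection_bop[OF proj_bop[OF Ep]] V(2,3)])
  then show ?thesis
    using commute_if_reflection_commute[OF proj_bop[OF Ep] proj_bop[OF is_proj_P_ac_inf]]
    by (simp add: P_ac_inf_def)
qed

theorem proposition5p6:
  fixes M :: "('a::chilbert \<Rightarrow> 'a) set"
    and \<tau> :: "('a \<Rightarrow> 'a) \<Rightarrow> ennreal"
    and E :: "real \<Rightarrow> ('a \<Rightarrow> 'a)"
  assumes "von_neumann_algebra M"
    and "countably_decomposable M"
    and "properly_infinite M"
    and "faithful_normal_semifinite_trace M \<tau>"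
    and "affiliated_spectral_resolution M E"
  shows "P_ac_inf M E \<in> commutant (vN_generated M (range E)) \<inter> M"
proof -
  note M = assms(1) and E = assms(5)
  have E_proj: "is_proj (E s)" and EM: "E s \<in> M" for s
    using E by (auto simp: affiliated_spectral_resolution_def)
  have "P_ac_inf M E \<in> commutant (range E)"
    using P_ac_inf_commute_spectral_projection[OF M E] proj_bop[OF is_proj_P_ac_inf]
    by (auto simp: commutant_def)
  also have "commutant (range E) = commutant (commutant (commutant (range E)))"
    using E_proj by (intro triple_commutant[symmetric]) (auto simp: is_proj_def)
  also have "\<dots> \<subseteq> commutant (vN_generated M (range E))"
    using EM E_proj by (intro commutant_antimono vN_generated_subset_double_commutant[OF M])
      (auto simp: is_proj_def)
  finally show ?thesis using P_ac_inf_in_von_neumann_algebra[OF M] by simp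
qed

end
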